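(* Let $\mathcal{A}$ be a complete deterministic timed automaton (CTA). Let $\gamma_{r1}$ and $\gamma_{r2}$ be valid reset-clocked words of $\mathcal{A}$ and let $\xi$ be a region word. If $\gamma_{r1}$ and $\gamma_{r2}$ reach the same symbolic state of $\mathcal{A}$, then for all $\gamma_{r1}'\in\mathit{vs}_{\mathcal{A}}(\gamma_{r1},\xi)$ and $\gamma_{r2}'\in\mathit{vs}_{\mathcal{A}}(\gamma_{r2},\xi)$: (1) $resets(\gamma_{r1}')=resets(\gamma_{r2}')$; (2) $\gamma_{r1}\gamma_{r1}'$ and $\gamma_{r2}\gamma_{r2}'$ reach the same symbolic state.
   Context: Let $\Sigma$ be a finite alphabet and $\mathcal{C}=\{c_1,\dots,c_m\}$ a finite set of clocks. A clock constraint is a finite conjunction of atomic constraints $c\sim k$ ($c\in\mathcal{C}$, $k\in\mathbb{N}$, ${\sim}\in\{<,\le,=,\ge,>\}$). A clock valuation is $\nu:\mathcal{C}\to\mathbb{R}_{\ge0}$ (identified with a vector in $\mathbb{R}_{\ge0}^m$); $\nu+d$ adds $d$ to all clocks, $[\mathcal{B}\to0]\nu$ resets the clocks in $\mathcal{B}$. A timed automaton is $\mathcal{A}=(\Sigma,L,l_0,F,\mathcal{C},\Delta)$ with finite location set $L$, initial $l_0$, accepting $F\subseteq L$, transitions $\Delta\subseteq L\times\Sigma\times\Phi(\mathcal{C})\times2^{\mathcal{C}}\times L$. A run over a delay-timed word $(\sigma_1,t_1)\cdots(\sigma_n,t_n)$ is $(l_0,\nu_0)\xrightarrow{t_1,\sigma_1}\cdots\xrightarrow{t_n,\sigma_n}(l_n,\nu_n)$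 with $\nu_0\equiv0$ and transitions $(l_{i-1},\sigma_i,\phi_i,\mathcal{B}_i,l_i)\in\Delta$ such that $\nu_{i-1}+t_i$ satisfies $\phi_i$ and $\nu_i=[\mathcal{B}_i\to0](\nu_{i-1}+t_i)$. $\mathcal{A}$ is a CTA if every delay-timed word has exactly one run. The reset-clocked word of the run is $(\sigma_1,\mathbf{v}_1,\mathbf{b}_1)\cdots(\sigma_n,\mathbf{v}_n,\mathbf{b}_n)$ with $\mathbf{v}_i=\nu_{i-1}+t_i$ and $\mathbf{b}_{i,j}=\top$ iff $c_j\in\mathcal{B}_i$ (else $\bot$); $resets(\cdot)$ returns the sequence $\mathbf{b}_1,\dots,\mathbf{b}_n$ and $vw(\cdot)$ drops the reset components. A reset-clocked word is valid for $\mathcal{A}$ if it is the reset-clocked word of some run, and it then reaches the symbolic state $(l_n,\llbracket\nu_n\rrbracket)$ of that run. Regions: with $\kappa(c)$ the largest integer in guards of $\mathcal{A}$ over $c$, valuations $\nu,\nu'$ are region-equivalent iff (i) for all $c$, $\lfloor\nu(c)\rfloor=\lfloor\nu'(c)\rfloor$ or both exceed $\kappa(c)$; (ii) for all $c$ with $\nu(c)\le\kappa(c)$, $\mathrm{frac}(\nu(c))=0$ iff $\mathrm{frac}(\nu'(c))=0$; (iii) for $c_i,c_j$ with $\nu(c_i)\le\kappa(c_i),\nu(c_j)\le\kappa(c_j)$, $\mathrm{frac}(\nu(c_i))\le\mathrm{frac}(\nu(c_j))$ iff $\mathrm{frac}(\nu'(c_i))\le\mathrm{frac}(\nu'(c_j))$;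 $\llbracket\nu\rrbracket$ is the region of $\nu$ and a symbolic state is a pair (location, region). A region word is a finite sequence of pairs $(\sigma,R)$, $\sigma\in\Sigma$, $R$ a region; a clocked word $(\sigma_1,\mathbf{v}_1)\cdots(\sigma_n,\mathbf{v}_n)$ has region word $\llbracket\cdot\rrbracket=(\sigma_1,\llbracket\mathbf{v}_1\rrbracket)\cdots(\sigma_n,\llbracket\mathbf{v}_n\rrbracket)$. $\mathit{vs}_{\mathcal{A}}(\gamma_r,\xi)$ is the set of reset-clocked words $\gamma_r'$ with $\llbracket vw(\gamma_r')\rrbracket=\xi$ such that $\gamma_r\gamma_r'$ is a valid reset-clocked word of $\mathcal{A}$. *)

theory Defs
  imports Complex_Main
begin

datatype cmp = CLt | CLe | CEq | CGe | CGt

fun cmp_sem :: "cmp \<Rightarrow> real \<Rightarrow> real \<Rightarrow> bool" where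
  "cmp_sem CLt x k = (x < k)"
| "cmp_sem CLe x k = (x \<le> k)"
| "cmp_sem CEq x k = (x = k)"
| "cmp_sem CGe x k = (x \<ge> k)"
| "cmp_sem CGt x k = (x > k)"

type_synonym 'c constr = "('c \<times> cmp \<times> nat) list"
type_synonym 'c val = "'c \<Rightarrow> real"

definition sat :: "'c val \<Rightarrow> 'c constr \<Rightarrow> bool" where
  "sat \<nu> \<phi> = (\<forall>(c, op, k) \<in> set \<phi>. cmp_sem op (\<nu> c) (real k))"

definition delay :: "'c val \<Rightarrow> real \<Rightarrow> 'c val" where
  "delay \<nu> d = (\<lambda>c. \<nu> c + d)"

definition reset :: "'c set \<Rightarrow> 'c val \<Rightarrow> 'c val" where
  "reset B \<nu> = (\<lambda>c. if c \<in> B then 0 else \<nu> c)"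

type_synonym ('l, 's, 'c) transition = "'l \<times> 's \<times> 'c constr \<times> 'c set \<times> 'l"

record ('s, 'l, 'c) ta =
  alphabet :: "'s set"
  locs :: "'l set"
  init :: 'l
  accepting :: "'l set"
  trans :: "('l, 's, 'c) transition set"

definition wf_ta :: "('s, 'l, 'c) ta \<Rightarrow> bool" where
  "wf_ta A \<longleftrightarrow> finite (alphabet A) \<and> finite (locs A) \<and> init A \<in> locs A
     \<and> accepting A \<subseteq> locs A \<and> finite (trans A)
     \<and> (\<forall>(l, \<sigma>, \<phi>, B, l') \<in> trans A. l \<in> locs A \<and> \<sigma> \<in> alphabet A \<and> l' \<in> locs A)"

definition dtw :: "('s, 'l, 'c) ta \<Rightarrow> ('s \<times> real) list \<Rightarrow> bool" where
  "dtw A w \<longleftrightarrow> (\<forall>(\<sigma>, t) \<in> set w. \<sigma> \<in> alphabet A \<and> t \<ge> 0)"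

fun is_run :: "('s, 'l, 'c) ta \<Rightarrow> 'l \<Rightarrow> 'c val \<Rightarrow> ('s \<times> real) list
     \<Rightarrow> ('l, 's, 'c) transition list \<Rightarrow> bool" where
  "is_run A l \<nu> [] [] = True"
| "is_run A l \<nu> ((\<sigma>, t) # w) ((l1, \<sigma>1, \<phi>, B, l2) # trs) =
     ((l1, \<sigma>1, \<phi>, B, l2) \<in> trans A \<and> l1 = l \<and> \<sigma>1 = \<sigma> \<and> sat (delay \<nu> t) \<phi>
      \<and> is_run A l2 (reset B (delay \<nu> t)) w trs)"
| "is_run A l \<nu> _ _ = False"

text \<open>Reset-clocked words: (\<sigma>, v, b) with b c = True iff clock c is reset.\<close>
type_synonym ('s, 'c) rcword = "('s \<times> 'c val \<times> ('c \<Rightarrow> bool)) list"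

fun run_rcw :: "'c val \<Rightarrow> ('s \<times> real) list \<Rightarrow> ('l, 's, 'c) transition list \<Rightarrow> ('s, 'c) rcword" where
  "run_rcw \<nu> ((\<sigma>, t) # w) ((l1, \<sigma>1, \<phi>, B, l2) # trs) =
     (\<sigma>, delay \<nu> t, \<lambda>c. c \<in> B) # run_rcw (reset B (delay \<nu> t)) w trs"
| "run_rcw \<nu> _ _ = []"

fun run_end :: "'l \<Rightarrow> 'c val \<Rightarrow> ('s \<times> real) list \<Rightarrow> ('l, 's, 'c) transition list \<Rightarrow> 'l \<times> 'c val" where
  "run_end l \<nu> ((\<sigma>, t) # w) ((l1, \<sigma>1, \<phi>, B, l2) # trs) =
     run_end l2 (reset B (delay \<nu> t)) w trs"
| "run_end l \<nu> _ _ = (l, \<nu>)"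

definition cta :: "('s, 'l, 'c) ta \<Rightarrow> bool" where
  "cta A \<longleftrightarrow> wf_ta A \<and> (\<forall>w. dtw A w \<longrightarrow> (\<exists>!trs. is_run A (init A) (\<lambda>_. 0) w trs))"

definition kappa :: "('s, 'l, 'c) ta \<Rightarrow> 'c \<Rightarrow> nat" where
  "kappa A c = Max ({k. \<exists>(l, \<sigma>, \<phi>, B, l') \<in> trans A. \<exists>op. (c, op, k) \<in> set \<phi>} \<union> {0})"

text \<open>The three conditions of the paper, literally (one direction).\<close>
definition region_cond :: "('c \<Rightarrow> nat) \<Rightarrow> 'c val \<Rightarrow> 'c val \<Rightarrow> bool" where
  "region_cond \<kappa> \<nu> \<nu>' \<longleftrightarrow>
     (\<forall>c. \<lfloor>\<nu> c\<rfloor> = \<lfloor>\<nu>' c\<rfloor> \<or> (\<nu> c > real (\<kappa> c) \<and> \<nu>' c > real (\<kappa> c)))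
   \<and> (\<forall>c. \<nu> c \<le> real (\<kappa> c) \<longrightarrow> (frac (\<nu> c) = 0 \<longleftrightarrow> frac (\<nu>' c) = 0))
   \<and> (\<forall>ci cj. \<nu> ci \<le> real (\<kappa> ci) \<and> \<nu> cj \<le> real (\<kappa> cj) \<longrightarrow>
        (frac (\<nu> ci) \<le> frac (\<nu> cj) \<longleftrightarrow> frac (\<nu>' ci) \<le> frac (\<nu>' cj)))"

definition region_equiv :: "('s, 'l, 'c) ta \<Rightarrow> 'c val \<Rightarrow> 'c val \<Rightarrow> bool" where
  "region_equiv A \<nu> \<nu>' \<longleftrightarrow> region_cond (kappa A) \<nu> \<nu>' \<and> region_cond (kappa A) \<nu>' \<nu>"

definition region :: "('s, 'l, 'c) ta \<Rightarrow> 'c val \<Rightarrow> 'c val set" where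
  "region A \<nu> = {\<nu>'. region_equiv A \<nu> \<nu>'}"

type_synonym ('s, 'c) region_word = "('s \<times> 'c val set) list"

definition is_region :: "('s, 'l, 'c) ta \<Rightarrow> 'c val set \<Rightarrow> bool" where
  "is_region A R \<longleftrightarrow> (\<exists>\<nu>. (\<forall>c. \<nu> c \<ge> 0) \<and> R = region A \<nu>)"

definition is_region_word :: "('s, 'l, 'c) ta \<Rightarrow> ('s, 'c) region_word \<Rightarrow> bool" where
  "is_region_word A \<xi> \<longleftrightarrow> (\<forall>(\<sigma>, R) \<in> set \<xi>. \<sigma> \<in> alphabet A \<and> is_region A R)"

definition resets :: "('s, 'c) rcword \<Rightarrow> ('c \<Rightarrow> bool) list" where
  "resets \<gamma> = map (\<lambda>(\<sigma>, v, b). b) \<gamma>"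

definition vw :: "('s, 'c) rcword \<Rightarrow> ('s \<times> 'c val) list" where
  "vw \<gamma> = map (\<lambda>(\<sigma>, v, b). (\<sigma>, v)) \<gamma>"

definition region_word_of :: "('s, 'l, 'c) ta \<Rightarrow> ('s \<times> 'c val) list \<Rightarrow> ('s, 'c) region_word" where
  "region_word_of A \<gamma> = map (\<lambda>(\<sigma>, v). (\<sigma>, region A v)) \<gamma>"

definition valid :: "('s, 'l, 'c) ta \<Rightarrow> ('s, 'c) rcword \<Rightarrow> bool" where
  "valid A \<gamma> \<longleftrightarrow> (\<exists>w trs. dtw A w \<and> is_run A (init A) (\<lambda>_. 0) w trs
                       \<and> run_rcw (\<lambda>_. 0) w trs = \<gamma>)"

definition reaches :: "('s, 'l, 'c) ta \<Rightarrow> ('s, 'c) rcword \<Rightarrow> 'l \<times> 'c val set \<Rightarrow> bool" where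
  "reaches A \<gamma> s \<longleftrightarrow> (\<exists>w trs. dtw A w \<and> is_run A (init A) (\<lambda>_. 0) w trs
       \<and> run_rcw (\<lambda>_. 0) w trs = \<gamma>
       \<and> (let (l, \<nu>) = run_end (init A) (\<lambda>_. 0) w trs in s = (l, region A \<nu>)))"

definition vs :: "('s, 'l, 'c) ta \<Rightarrow> ('s, 'c) rcword \<Rightarrow> ('s, 'c) region_word \<Rightarrow> ('s, 'c) rcword set" where
  "vs A \<gamma> \<xi> = {\<gamma>'. region_word_of A (vw \<gamma>') = \<xi> \<and> valid A (\<gamma> @ \<gamma>')}"

end

theory Submission
  imports Defs
begin

text \<open>Region-equivalent valuations satisfy the same guards, because every constant a guard
  compares a clock with is at most that clock's bound \<open>\<kappa>\<close>, and resetting the same clocks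
  preserves region equivalence. Now let two runs start in the same location from
  region-equivalent valuations and read the same region word, the second starting from a
  reachable configuration. In each step the first run's transition is also enabled for the
  second run; as a CTA has exactly one run per timed word, it is the transition the second run
  takes. By induction both runs reset the same clocks and end in the same location with
  region-equivalent valuations. The runs of \<open>\<gamma>\<^sub>i\<gamma>\<^sub>i'\<close> split in this way, since a
  reset-clocked word determines its timed word and therefore, in a CTA, its run.\<close>

lemma cmp_sem_cong_floor_frac:
  assumes "\<lfloor>x\<rfloor> = \<lfloor>y\<rfloor>" "frac x = 0 \<longleftrightarrow> frac y = 0"
  shows "cmp_sem op x (real k) \<longleftrightarrow> cmp_sem op y (real k)"
proof -
  have less_iff: "z < real k \<longleftrightarrow> \<lfloor>z\<rfloor> < int k" for z :: real
    by linarith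
  have eq_iff_floor_frac: "z = real k \<longleftrightarrow> \<lfloor>z\<rfloor> = int k \<and> frac z = 0" for z :: real
    by (auto simp: frac_def)
  have "x < real k \<longleftrightarrow> y < real k" "x = real k \<longleftrightarrow> y = real k"
    unfolding less_iff eq_iff_floor_frac using assms by simp_all
  then show ?thesis
    by (cases op) auto
qed

lemma region_cond_bounded:
  assumes "region_cond \<kappa> \<nu> \<nu>'" "\<nu> c \<le> real (\<kappa> c)"
  shows "\<lfloor>\<nu> c\<rfloor> = \<lfloor>\<nu>' c\<rfloor>" "frac (\<nu> c) = 0 \<longleftrightarrow> frac (\<nu>' c) = 0"
proof -
  from assms(1) have "\<lfloor>\<nu> c\<rfloor> = \<lfloor>\<nu>' c\<rfloor> \<or> (\<nu> c > real (\<kappa> c) \<and> \<nu>' c > real (\<kappa> c))"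
    and "\<nu> c \<le> real (\<kappa> c) \<longrightarrow> (frac (\<nu> c) = 0 \<longleftrightarrow> frac (\<nu>' c) = 0)"
    unfolding region_cond_def by blast+
  with assms(2) show "\<lfloor>\<nu> c\<rfloor> = \<lfloor>\<nu>' c\<rfloor>" "frac (\<nu> c) = 0 \<longleftrightarrow> frac (\<nu>' c) = 0"
    by (meson not_le)+
qed

lemma region_cond_frac_order:
  assumes "region_cond \<kappa> \<nu> \<nu>'" "\<nu> ci \<le> real (\<kappa> ci)" "\<nu> cj \<le> real (\<kappa> cj)"
  shows "frac (\<nu> ci) \<le> frac (\<nu> cj) \<longleftrightarrow> frac (\<nu>' ci) \<le> frac (\<nu>' cj)"
  using assms unfolding region_cond_def by blast

lemma region_cond_le_kappa:
  assumes "region_cond \<kappa> \<nu> \<nu>'" "\<nu> c \<le> real (\<kappa> c)"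
  shows "\<nu>' c \<le> real (\<kappa> c)"
  using assms(2) cmp_sem_cong_floor_frac[OF region_cond_bounded[OF assms], of CLe "\<kappa> c"] by simp

lemma region_equiv_le_kappa_iff:
  "region_equiv A \<nu> \<nu>' \<Longrightarrow> \<nu> c \<le> real (kappa A c) \<longleftrightarrow> \<nu>' c \<le> real (kappa A c)"
  using region_cond_le_kappa[of "kappa A" \<nu> \<nu>' c] region_cond_le_kappa[of "kappa A" \<nu>' \<nu> c]
  unfolding region_equiv_def by blast

lemma region_equiv_refl: "region_equiv A \<nu> \<nu>"
  unfolding region_equiv_def region_cond_def by auto

lemma region_equiv_sym: "region_equiv A \<nu> \<nu>' \<Longrightarrow> region_equiv A \<nu>' \<nu>"
  unfolding region_equiv_def by auto

text \<open>The one-sided condition alone is not transitive; the reverse conditions are needed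
  to keep clocks above their bound from dropping below it.\<close>
lemma region_cond_trans:
  assumes xy: "region_cond \<kappa> x y" and yx: "region_cond \<kappa> y x"
    and yz: "region_cond \<kappa> y z" and zy: "region_cond \<kappa> z y"
  shows "region_cond \<kappa> x z"
  unfolding region_cond_def
proof (intro conjI allI impI)
  fix c
  show "\<lfloor>x c\<rfloor> = \<lfloor>z c\<rfloor> \<or> (x c > real (\<kappa> c) \<and> z c > real (\<kappa> c))"
  proof (cases "x c \<le> real (\<kappa> c)")
    case True
    then have "y c \<le> real (\<kappa> c)"
      using region_cond_le_kappa[OF xy] by blast
    then show ?thesis
      using region_cond_bounded(1)[OF xy True] region_cond_bounded(1)[OF yz] by simp
  next
    case False
    then have "\<not> z c \<le> real (\<kappa> c)"
      using region_cond_le_kappa[OF zy] region_cond_le_kappa[OF yx] by blast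
    then show ?thesis
      using False by simp
  qed
next
  fix c
  assume x_bounded: "x c \<le> real (\<kappa> c)"
  then have "y c \<le> real (\<kappa> c)"
    by (rule region_cond_le_kappa[OF xy])
  then show "frac (x c) = 0 \<longleftrightarrow> frac (z c) = 0"
    using region_cond_bounded(2)[OF xy x_bounded] region_cond_bounded(2)[OF yz] by simp
next
  fix ci cj
  assume "x ci \<le> real (\<kappa> ci) \<and> x cj \<le> real (\<kappa> cj)"
  then have "x ci \<le> real (\<kappa> ci)" "x cj \<le> real (\<kappa> cj)"
    "y ci \<le> real (\<kappa> ci)" "y cj \<le> real (\<kappa> cj)"
    using region_cond_le_kappa[OF xy] by blast+
  then show "frac (x ci) \<le> frac (x cj) \<longleftrightarrow> frac (z ci) \<le> frac (z cj)"
    using region_cond_frac_order[OF xy] region_cond_frac_order[OF yz] by simp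
qed

lemma region_equiv_trans:
  "region_equiv A u v \<Longrightarrow> region_equiv A v w \<Longrightarrow> region_equiv A u w"
  unfolding region_equiv_def
  using region_cond_trans[of "kappa A" u v w] region_cond_trans[of "kappa A" w v u] by blast

lemma region_eq_iff: "region A \<nu> = region A \<nu>' \<longleftrightarrow> region_equiv A \<nu> \<nu>'"
proof
  assume "region A \<nu> = region A \<nu>'"
  then show "region_equiv A \<nu> \<nu>'"
    using region_equiv_refl[of A \<nu>'] unfolding region_def by blast
next
  assume equiv: "region_equiv A \<nu> \<nu>'"
  show "region A \<nu> = region A \<nu>'"
    unfolding region_def
    using region_equiv_trans[OF equiv] region_equiv_trans[OF region_equiv_sym[OF equiv]] by blast
qed

lemma region_equiv_cmp_sem:
  assumes "region_equiv A \<nu> \<nu>'" "k \<le> kappa A c" "cmp_sem op (\<nu> c) (real k)"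
  shows "cmp_sem op (\<nu>' c) (real k)"
proof (cases "\<nu> c \<le> real (kappa A c)")
  case True
  have cond: "region_cond (kappa A) \<nu> \<nu>'"
    using assms(1) unfolding region_equiv_def ..
  show ?thesis
    using assms(3) cmp_sem_cong_floor_frac[OF region_cond_bounded[OF cond True]] by blast
next
  case False
  then have "\<nu>' c > real (kappa A c)"
    using region_equiv_le_kappa_iff[OF assms(1)] by simp
  then have "\<nu> c > real k" "\<nu>' c > real k"
    using False assms(2) by linarith+
  then show ?thesis
    using assms(3) by (cases op) auto
qed

lemma kappa_ge:
  assumes "wf_ta A" "(l, \<sigma>, \<phi>, B, l') \<in> trans A" "(c, op, k) \<in> set \<phi>"
  shows "k \<le> kappa A c"
proof -
  let ?K = "{k. \<exists>(l, \<sigma>, \<phi>, B, l') \<in> trans A. \<exists>op. (c, op, k) \<in> set \<phi>}"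
  have "?K \<subseteq> (\<Union>(l, \<sigma>, \<phi>, B, l') \<in> trans A. snd ` snd ` set \<phi>)"
    by force
  moreover have "finite (\<Union>(l, \<sigma>, \<phi>, B, l') \<in> trans A. snd ` snd ` set \<phi>)"
    using assms(1) unfolding wf_ta_def by (intro finite_UN_I) (auto split: prod.split)
  ultimately have "finite ?K"
    by (rule finite_subset)
  moreover have "k \<in> ?K"
    using assms(2,3) by blast
  ultimately show ?thesis
    unfolding kappa_def by (intro Max_ge) auto
qed

lemma region_equiv_sat:
  assumes "wf_ta A" "(l, \<sigma>, \<phi>, B, l') \<in> trans A" "region_equiv A \<nu> \<nu>'" "sat \<nu> \<phi>"
  shows "sat \<nu>' \<phi>"
  unfolding sat_def
proof clarify
  fix c op k
  assume atom: "(c, op, k) \<in> set \<phi>"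
  then have "cmp_sem op (\<nu> c) (real k)"
    using assms(4) unfolding sat_def by auto
  then show "cmp_sem op (\<nu>' c) (real k)"
    using region_equiv_cmp_sem[OF assms(3) kappa_ge[OF assms(1,2) atom]] by blast
qed

lemma region_equiv_reset:
  assumes "region_equiv A \<nu> \<nu>'"
  shows "region_equiv A (reset B \<nu>) (reset B \<nu>')"
proof -
  have frac_le_0_iff: "frac x \<le> 0 \<longleftrightarrow> frac x = 0" for x :: real
    using frac_ge_0[of x] by linarith
  have "region_cond \<kappa> (reset B \<nu>) (reset B \<nu>')" if "region_cond \<kappa> \<nu> \<nu>'" for \<kappa> \<nu> \<nu>'
    using that unfolding region_cond_def reset_def by (auto simp: frac_le_0_iff)
  then show ?thesis
    using assms unfolding region_equiv_def by blast
qed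

lemma is_run_length: "is_run A l \<nu> w trs \<Longrightarrow> length w = length trs"
  by (induction A l \<nu> w trs rule: is_run.induct) auto

lemma length_run_rcw: "is_run A l \<nu> w trs \<Longrightarrow> length (run_rcw \<nu> w trs) = length w"
  by (induction A l \<nu> w trs rule: is_run.induct) auto

lemma is_run_append:
  "length w = length trs \<Longrightarrow> is_run A l \<nu> (w @ u) (trs @ ss) \<longleftrightarrow>
    is_run A l \<nu> w trs \<and> is_run A (fst (run_end l \<nu> w trs)) (snd (run_end l \<nu> w trs)) u ss"
proof (induction w trs arbitrary: l \<nu> rule: list_induct2)
  case (Cons x w tr trs)
  then show ?case
    by (cases x; cases tr) auto
qed simp

lemma run_rcw_append:
  "length w = length trs \<Longrightarrow>
    run_rcw \<nu> (w @ u) (trs @ ss) = run_rcw \<nu> w trs @ run_rcw (snd (run_end l \<nu> w trs)) u ss"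
proof (induction w trs arbitrary: l \<nu> rule: list_induct2)
  case (Cons x w tr trs)
  then show ?case
    by (cases x; cases tr) auto
qed simp

lemma run_end_append:
  "length w = length trs \<Longrightarrow>
    run_end l \<nu> (w @ u) (trs @ ss) = run_end (fst (run_end l \<nu> w trs)) (snd (run_end l \<nu> w trs)) u ss"
proof (induction w trs arbitrary: l \<nu> rule: list_induct2)
  case (Cons x w tr trs)
  then show ?case
    by (cases x; cases tr) auto
qed simp

lemma dtw_append: "dtw A (w @ u) \<longleftrightarrow> dtw A w \<and> dtw A u"
  unfolding dtw_def by auto

lemma run_rcw_inj_word:
  "length w = length trs \<Longrightarrow> length w' = length trs' \<Longrightarrow>
    run_rcw \<nu> w trs = run_rcw \<nu> w' trs' \<Longrightarrow> w = w'"
proof (induction w trs arbitrary: \<nu> w' trs' rule: list_induct2)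
  case Nil
  then show ?case
    by (cases w'; cases trs') auto
next
  case (Cons x w tr trs)
  obtain \<sigma> t l1 \<sigma>1 \<phi> B l2 where x: "x = (\<sigma>, t)" and tr: "tr = (l1, \<sigma>1, \<phi>, B, l2)"
    by (cases x; cases tr)
  have "run_rcw \<nu> w' trs' \<noteq> []"
    using Cons.prems(2)[symmetric] unfolding x tr by simp
  then have "w' \<noteq> []" "trs' \<noteq> []"
    by (cases w'; cases trs'; auto)+
  then obtain \<sigma>' t' w'' l1' \<sigma>1' \<phi>' B' l2' trs'' where
    w': "w' = (\<sigma>', t') # w''" and trs': "trs' = (l1', \<sigma>1', \<phi>', B', l2') # trs''"
    by (metis neq_Nil_conv prod_cases5 surj_pair)
  have letter: "\<sigma> = \<sigma>'" and delays: "delay \<nu> t = delay \<nu> t'"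
    and resets: "(\<lambda>c. c \<in> B) = (\<lambda>c. c \<in> B')"
    and rest: "run_rcw (reset B (delay \<nu> t)) w trs = run_rcw (reset B' (delay \<nu> t')) w'' trs''"
    using Cons.prems(2) unfolding x tr w' trs' run_rcw.simps list.inject prod.inject by blast+
  from delays have "t = t'"
    unfolding delay_def by (metis add_left_cancel)
  moreover from resets have "B = B'"
    by (simp add: fun_eq_iff set_eq_iff)
  moreover have "length w'' = length trs''"
    using Cons.prems(1) unfolding w' trs' by simp
  ultimately have "w = w''"
    using Cons.IH rest by simp
  then show ?case
    using letter \<open>t = t'\<close> unfolding x w' by simp
qed

lemma is_run_ConsE:
  assumes "is_run A l \<nu> (x # u) ss"
  obtains \<sigma> t \<phi> B l' ss' where "x = (\<sigma>, t)" "ss = (l, \<sigma>, \<phi>, B, l') # ss'"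
    "(l, \<sigma>, \<phi>, B, l') \<in> trans A" "sat (delay \<nu> t) \<phi>" "is_run A l' (reset B (delay \<nu> t)) u ss'"
  using assms by (cases x; cases ss rule: list.exhaust[case_product prod_cases5]) auto

lemma run_rcw_split:
  assumes "is_run A l \<nu> W TR" "run_rcw \<nu> W TR = \<gamma> @ \<gamma>'"
  obtains w u trs ss where "W = w @ u" "TR = trs @ ss" "length w = length trs"
    "run_rcw \<nu> w trs = \<gamma>" "run_rcw (snd (run_end l \<nu> w trs)) u ss = \<gamma>'"
proof -
  let ?n = "length \<gamma>"
  have "length W = length TR"
    using assms(1) by (rule is_run_length)
  moreover have "length W = length \<gamma> + length \<gamma>'"
    using length_run_rcw[OF assms(1)] assms(2) by simp
  ultimately have len: "length (take ?n W) = length (take ?n TR)"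
    by simp
  have "run_rcw \<nu> (take ?n W) (take ?n TR) @
      run_rcw (snd (run_end l \<nu> (take ?n W) (take ?n TR))) (drop ?n W) (drop ?n TR) = \<gamma> @ \<gamma>'"
    using assms(2) run_rcw_append[OF len, of \<nu> "drop ?n W" "drop ?n TR" l] by simp
  moreover have "is_run A l \<nu> (take ?n W) (take ?n TR)"
    using assms(1) is_run_append[OF len, of A l \<nu> "drop ?n W" "drop ?n TR"] by simp
  then have "length (run_rcw \<nu> (take ?n W) (take ?n TR)) = ?n"
    using \<open>length W = length \<gamma> + length \<gamma>'\<close> by (simp add: length_run_rcw)
  ultimately show ?thesis
    using that[of "take ?n W" "drop ?n W" "take ?n TR" "drop ?n TR"] len by simp
qed

text \<open>Determinism of a CTA speaks only about runs from the initial configuration, so the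
  simulation below keeps track of the reachability of the second configuration.\<close>
definition reachable :: "('s, 'l, 'c) ta \<Rightarrow> 'l \<Rightarrow> 'c val \<Rightarrow> bool" where
  "reachable A l \<nu> \<longleftrightarrow> (\<exists>w trs. dtw A w \<and> is_run A (init A) (\<lambda>_. 0) w trs
                                \<and> run_end (init A) (\<lambda>_. 0) w trs = (l, \<nu>))"

lemma is_run_snoc:
  assumes "is_run A l0 \<nu>0 w trs" "run_end l0 \<nu>0 w trs = (l, \<nu>)"
    "(l, \<sigma>, \<phi>, B, l') \<in> trans A" "sat (delay \<nu> t) \<phi>"
  shows "is_run A l0 \<nu>0 (w @ [(\<sigma>, t)]) (trs @ [(l, \<sigma>, \<phi>, B, l')])"
    and "run_end l0 \<nu>0 (w @ [(\<sigma>, t)]) (trs @ [(l, \<sigma>, \<phi>, B, l')]) = (l', reset B (delay \<nu> t))"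
  using assms is_run_append[OF is_run_length[OF assms(1)]] run_end_append[OF is_run_length[OF assms(1)]]
  by simp_all

lemma reachable_step:
  assumes "reachable A l \<nu>" "(l, \<sigma>, \<phi>, B, l') \<in> trans A" "\<sigma> \<in> alphabet A" "t \<ge> 0"
    "sat (delay \<nu> t) \<phi>"
  shows "reachable A l' (reset B (delay \<nu> t))"
proof -
  obtain w trs where "dtw A w" "is_run A (init A) (\<lambda>_. 0) w trs"
    "run_end (init A) (\<lambda>_. 0) w trs = (l, \<nu>)"
    using assms(1) unfolding reachable_def by blast
  moreover from this(1) have "dtw A (w @ [(\<sigma>, t)])"
    using assms(3,4) unfolding dtw_def by auto
  ultimately show ?thesis
    using is_run_snoc[OF _ _ assms(2,5)] unfolding reachable_def by blast
qed

lemma cta_run_unique: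
  "cta A \<Longrightarrow> dtw A w \<Longrightarrow> is_run A (init A) (\<lambda>_. 0) w trs \<Longrightarrow> is_run A (init A) (\<lambda>_. 0) w trs'
    \<Longrightarrow> trs' = trs"
  unfolding cta_def by blast

lemma cta_transition_unique:
  assumes "cta A" "reachable A l \<nu>" "t \<ge> 0"
    "(l, \<sigma>, \<phi>, B, l') \<in> trans A" "sat (delay \<nu> t) \<phi>"
    "(l, \<sigma>, \<phi>', B', l'') \<in> trans A" "sat (delay \<nu> t) \<phi>'"
  shows "(\<phi>', B', l'') = (\<phi>, B, l')"
proof -
  obtain w trs where w: "dtw A w" and run: "is_run A (init A) (\<lambda>_. 0) w trs"
    and run_end: "run_end (init A) (\<lambda>_. 0) w trs = (l, \<nu>)"
    using assms(2) unfolding reachable_def by blast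
  have "\<sigma> \<in> alphabet A"
    using assms(1,4) unfolding cta_def wf_ta_def by blast
  with w assms(3) have "dtw A (w @ [(\<sigma>, t)])"
    unfolding dtw_def by auto
  then have "trs @ [(l, \<sigma>, \<phi>', B', l'')] = trs @ [(l, \<sigma>, \<phi>, B, l')]"
    using cta_run_unique[OF assms(1)] is_run_snoc(1)[OF run run_end] assms(4-7) by blast
  then show ?thesis
    by simp
qed

lemma cta_region_equiv_same_transition:
  assumes "cta A" "reachable A l \<nu>2" "t2 \<ge> 0"
    "region_equiv A (delay \<nu>1 t1) (delay \<nu>2 t2)"
    "(l, \<sigma>, \<phi>1, B1, l1) \<in> trans A" "sat (delay \<nu>1 t1) \<phi>1"
    "(l, \<sigma>, \<phi>2, B2, l2) \<in> trans A" "sat (delay \<nu>2 t2) \<phi>2"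
  shows "(\<phi>2, B2, l2) = (\<phi>1, B1, l1)"
proof -
  have "wf_ta A"
    using assms(1) unfolding cta_def by blast
  from region_equiv_sat[OF this assms(5,4,6)] have "sat (delay \<nu>2 t2) \<phi>1" .
  then show ?thesis
    by (rule cta_transition_unique[OF assms(1-3,5) _ assms(7,8)])
qed

lemma resets_Cons: "resets ((\<sigma>, v, b) # \<gamma>) = b # resets \<gamma>"
  unfolding resets_def by simp

lemma region_word_of_vw_Cons:
  "region_word_of A (vw ((\<sigma>, v, b) # \<gamma>)) = (\<sigma>, region A v) # region_word_of A (vw \<gamma>)"
  unfolding region_word_of_def vw_def by simp

lemma length_region_word_of_vw: "length (region_word_of A (vw \<gamma>)) = length \<gamma>"
  unfolding region_word_of_def vw_def by simp

lemma length_eq_of_region_word_eq: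
  assumes "is_run A l1 \<nu>1 u1 ss1" "is_run A l2 \<nu>2 u2 ss2"
    "region_word_of A (vw (run_rcw \<nu>1 u1 ss1)) = region_word_of A (vw (run_rcw \<nu>2 u2 ss2))"
  shows "length u1 = length u2"
  using arg_cong[OF assms(3), of length]
  by (simp add: length_region_word_of_vw length_run_rcw[OF assms(1)] length_run_rcw[OF assms(2)])

lemma cta_region_simulation:
  assumes "cta A" and "reachable A l \<nu>2" and "region_equiv A \<nu>1 \<nu>2"
    and "is_run A l \<nu>1 u1 ss1" and "is_run A l \<nu>2 u2 ss2" and "dtw A u2"
    and "region_word_of A (vw (run_rcw \<nu>1 u1 ss1)) = region_word_of A (vw (run_rcw \<nu>2 u2 ss2))"
  shows "resets (run_rcw \<nu>1 u1 ss1) = resets (run_rcw \<nu>2 u2 ss2)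
    \<and> fst (run_end l \<nu>1 u1 ss1) = fst (run_end l \<nu>2 u2 ss2)
    \<and> region_equiv A (snd (run_end l \<nu>1 u1 ss1)) (snd (run_end l \<nu>2 u2 ss2))"
  using assms(2-)
proof (induction u1 arbitrary: l \<nu>1 \<nu>2 ss1 u2 ss2)
  case Nil
  then have "u2 = []"
    using length_eq_of_region_word_eq[OF Nil.prems(3,4,6)] by simp
  then show ?case
    using Nil.prems(2-4) by (cases ss1; cases ss2) auto
next
  case (Cons x u1)
  from Cons.prems(3) obtain \<sigma> t1 \<phi>1 B1 l1 ss1' where x: "x = (\<sigma>, t1)"
    and ss1: "ss1 = (l, \<sigma>, \<phi>1, B1, l1) # ss1'" and tr1: "(l, \<sigma>, \<phi>1, B1, l1) \<in> trans A"
    and sat1: "sat (delay \<nu>1 t1) \<phi>1" and run1: "is_run A l1 (reset B1 (delay \<nu>1 t1)) u1 ss1'"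
    by (rule is_run_ConsE)
  obtain x2 u2' where u2: "u2 = x2 # u2'"
    using length_eq_of_region_word_eq[OF Cons.prems(3,4,6)] by (cases u2) auto
  from Cons.prems(4) obtain \<sigma>2 t2 \<phi>2 B2 l2 ss2' where x2: "x2 = (\<sigma>2, t2)"
    and ss2: "ss2 = (l, \<sigma>2, \<phi>2, B2, l2) # ss2'" and tr2: "(l, \<sigma>2, \<phi>2, B2, l2) \<in> trans A"
    and sat2: "sat (delay \<nu>2 t2) \<phi>2" and run2: "is_run A l2 (reset B2 (delay \<nu>2 t2)) u2' ss2'"
    unfolding u2 by (rule is_run_ConsE)
  have "\<sigma>2 = \<sigma>" and "region A (delay \<nu>1 t1) = region A (delay \<nu>2 t2)"
    and words: "region_word_of A (vw (run_rcw (reset B1 (delay \<nu>1 t1)) u1 ss1')) =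
      region_word_of A (vw (run_rcw (reset B2 (delay \<nu>2 t2)) u2' ss2'))"
    using Cons.prems(6) unfolding x ss1 u2 x2 ss2 by (simp_all add: region_word_of_vw_Cons)
  then have delays: "region_equiv A (delay \<nu>1 t1) (delay \<nu>2 t2)"
    using region_eq_iff by blast
  have t2: "t2 \<ge> 0" and u2': "dtw A u2'"
    using Cons.prems(5) unfolding u2 x2 dtw_def by auto
  have same: "(\<phi>2, B2, l2) = (\<phi>1, B1, l1)"
    using cta_region_equiv_same_transition[OF assms(1) Cons.prems(1) t2 delays tr1 sat1]
      tr2 sat2 \<open>\<sigma>2 = \<sigma>\<close> by blast
  have "\<sigma> \<in> alphabet A"
    using assms(1) tr1 unfolding cta_def wf_ta_def by blast
  then have "reachable A l1 (reset B1 (delay \<nu>2 t2))"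
    using reachable_step[OF Cons.prems(1) _ _ t2] tr2 sat2 same \<open>\<sigma>2 = \<sigma>\<close> by auto
  moreover have "region_equiv A (reset B1 (delay \<nu>1 t1)) (reset B1 (delay \<nu>2 t2))"
    using delays by (rule region_equiv_reset)
  ultimately show ?case
    using Cons.IH[OF _ _ run1 _ u2' words] run2 same unfolding x ss1 u2 x2 ss2
    by (auto simp: resets_Cons)
qed

lemma reaches_iff:
  "reaches A \<gamma> (l, R) \<longleftrightarrow> (\<exists>w trs \<nu>. dtw A w \<and> is_run A (init A) (\<lambda>_. 0) w trs
     \<and> run_rcw (\<lambda>_. 0) w trs = \<gamma> \<and> run_end (init A) (\<lambda>_. 0) w trs = (l, \<nu>) \<and> R = region A \<nu>)"
  unfolding reaches_def Let_def by (auto simp: case_prod_beta prod_eq_iff)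

lemma reaches_valid_append:
  assumes "cta A" "reaches A \<gamma> (l, R)" "valid A (\<gamma> @ \<gamma>')"
  obtains \<nu> u ss where "reachable A l \<nu>" "region A \<nu> = R" "is_run A l \<nu> u ss" "dtw A u"
    "run_rcw \<nu> u ss = \<gamma>'"
    "reaches A (\<gamma> @ \<gamma>') (fst (run_end l \<nu> u ss), region A (snd (run_end l \<nu> u ss)))"
proof -
  obtain w0 trs0 \<nu> where w0: "dtw A w0" and run0: "is_run A (init A) (\<lambda>_. 0) w0 trs0"
    and rcw0: "run_rcw (\<lambda>_. 0) w0 trs0 = \<gamma>" and end0: "run_end (init A) (\<lambda>_. 0) w0 trs0 = (l, \<nu>)"
    and R: "R = region A \<nu>"
    using assms(2) unfolding reaches_iff by blast
  obtain W TR where W: "dtw A W" and run: "is_run A (init A) (\<lambda>_. 0) W TR"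
    and rcw: "run_rcw (\<lambda>_. 0) W TR = \<gamma> @ \<gamma>'"
    using assms(3) unfolding valid_def by blast
  obtain w u trs ss where W_split: "W = w @ u" "TR = trs @ ss" and len: "length w = length trs"
    and rcw_prefix: "run_rcw (\<lambda>_. 0) w trs = \<gamma>"
    and rcw_suffix: "run_rcw (snd (run_end (init A) (\<lambda>_. 0) w trs)) u ss = \<gamma>'"
    using run_rcw_split[OF run rcw] .
  have runs: "is_run A (init A) (\<lambda>_. 0) w trs"
    "is_run A (fst (run_end (init A) (\<lambda>_. 0) w trs)) (snd (run_end (init A) (\<lambda>_. 0) w trs)) u ss"
    using run is_run_append[OF len] unfolding W_split by simp_all
  have "w = w0"
    using run_rcw_inj_word[OF len is_run_length[OF run0], of "\<lambda>_. 0"] rcw_prefix rcw0 by simp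
  then have "trs = trs0"
    using cta_run_unique[OF assms(1) w0 run0] runs(1) by simp
  with \<open>w = w0\<close> have end_prefix: "run_end (init A) (\<lambda>_. 0) w trs = (l, \<nu>)"
    using end0 by simp
  show ?thesis
  proof
    show "reachable A l \<nu>"
      unfolding reachable_def using w0 run0 end0 by blast
    show "region A \<nu> = R" "is_run A l \<nu> u ss" "run_rcw \<nu> u ss = \<gamma>'"
      using R runs(2) rcw_suffix end_prefix by simp_all
    show "dtw A u"
      using W dtw_append unfolding W_split by blast
    have "run_end (init A) (\<lambda>_. 0) W TR = run_end l \<nu> u ss"
      using run_end_append[OF len] end_prefix unfolding W_split by simp
    then show "reaches A (\<gamma> @ \<gamma>') (fst (run_end l \<nu> u ss), region A (snd (run_end l \<nu> u ss)))"
      unfolding reaches_iff using W run rcw by (metis prod.collapse)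
  qed
qed

theorem lemma3p6:
  fixes A :: "('s, 'l, 'c::finite) ta"
    and \<gamma>1 \<gamma>2 \<gamma>1' \<gamma>2' :: "('s, 'c) rcword"
    and \<xi> :: "('s, 'c) region_word"
  assumes "cta A"
    and "valid A \<gamma>1" and "valid A \<gamma>2"
    and "is_region_word A \<xi>"
    and "\<exists>s. reaches A \<gamma>1 s \<and> reaches A \<gamma>2 s"
    and "\<gamma>1' \<in> vs A \<gamma>1 \<xi>" and "\<gamma>2' \<in> vs A \<gamma>2 \<xi>"
  shows "resets \<gamma>1' = resets \<gamma>2'
         \<and> (\<exists>s. reaches A (\<gamma>1 @ \<gamma>1') s \<and> reaches A (\<gamma>2 @ \<gamma>2') s)"
proof -
  \<comment> \<open>The hypotheses \<open>valid A \<gamma>\<^sub>i\<close> and \<open>is_region_word A \<xi>\<close> are implied by the others.\<close>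
  obtain l R where reaches1: "reaches A \<gamma>1 (l, R)" and reaches2: "reaches A \<gamma>2 (l, R)"
    using assms(5) by auto
  have valid1: "valid A (\<gamma>1 @ \<gamma>1')" and valid2: "valid A (\<gamma>2 @ \<gamma>2')"
    and words: "region_word_of A (vw \<gamma>1') = region_word_of A (vw \<gamma>2')"
    using assms(6,7) unfolding vs_def by simp_all
  obtain \<nu>1 u1 ss1 where "reachable A l \<nu>1" and R1: "region A \<nu>1 = R"
    and run1: "is_run A l \<nu>1 u1 ss1" and "dtw A u1" and rcw1: "run_rcw \<nu>1 u1 ss1 = \<gamma>1'"
    and ext1: "reaches A (\<gamma>1 @ \<gamma>1') (fst (run_end l \<nu>1 u1 ss1), region A (snd (run_end l \<nu>1 u1 ss1)))"
    by (rule reaches_valid_append[OF assms(1) reaches1 valid1])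
  obtain \<nu>2 u2 ss2 where reach2: "reachable A l \<nu>2" and R2: "region A \<nu>2 = R"
    and run2: "is_run A l \<nu>2 u2 ss2" and dtw2: "dtw A u2" and rcw2: "run_rcw \<nu>2 u2 ss2 = \<gamma>2'"
    and ext2: "reaches A (\<gamma>2 @ \<gamma>2') (fst (run_end l \<nu>2 u2 ss2), region A (snd (run_end l \<nu>2 u2 ss2)))"
    by (rule reaches_valid_append[OF assms(1) reaches2 valid2])
  have "region_equiv A \<nu>1 \<nu>2"
    using R1 R2 region_eq_iff by blast
  from cta_region_simulation[OF assms(1) reach2 this run1 run2 dtw2]
  have sim: "resets \<gamma>1' = resets \<gamma>2'" "fst (run_end l \<nu>1 u1 ss1) = fst (run_end l \<nu>2 u2 ss2)"
    "region A (snd (run_end l \<nu>1 u1 ss1)) = region A (snd (run_end l \<nu>2 u2 ss2))"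
    using words unfolding rcw1 rcw2 by (simp_all add: region_eq_iff)
  show ?thesis
    using ext1 ext2 unfolding sim by blast
qed

end
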